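(* For every integer $n\ge3$ there exists an irreducible $\lambda$-quiddity of size $n$ over the ring $\mathbb{Z}\times\mathbb{Z}$.
   Context: For $a_1,\ldots,a_n$ in a commutative unital ring $A$, $M_n(a_1,\ldots,a_n)=\begin{pmatrix}a_n&-1\\1&0\end{pmatrix}\cdots\begin{pmatrix}a_1&-1\\1&0\end{pmatrix}$. An $n$-tuple $(a_1,\ldots,a_n)\in A^n$ is a $\lambda$-quiddity over $A$ (of size $n$) if $M_n(a_1,\ldots,a_n)=\pm\mathrm{Id}$. For $(a_1,\ldots,a_n)\in A^n$, $(b_1,\ldots,b_m)\in A^m$, define $(a_1,\ldots,a_n)\oplus(b_1,\ldots,b_m)=(a_1+b_m,a_2,\ldots,a_{n-1},a_n+b_1,b_2,\ldots,b_{m-1})$. Write $(a_1,\ldots,a_n)\sim(b_1,\ldots,b_n)$ if $(b_1,\ldots,b_n)$ is obtained from $(a_1,\ldots,a_n)$ or from $(a_n,\ldots,a_1)$ by a cyclic permutation. A $\lambda$-quiddity $(c_1,\ldots,c_n)$ with $n\ge3$ is reducible if there exist a $\lambda$-quiddity $(b_1,\ldots,b_l)$ and a tuple $(a_1,\ldots,a_m)$ with $l,m\ge3$ and $(c_1,\ldots,c_n)\sim(a_1,\ldots,a_m)\oplus(b_1,\ldots,b_l)$; it is irreducible otherwise. *)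

theory Defs
  imports Main "HOL-Library.Product_Plus"
begin

instantiation prod :: (times, times) times
begin
definition times_prod_def: "x * y = (fst x * fst y, snd x * snd y)"
instance ..
end

instantiation prod :: (one, one) one
begin
definition one_prod_def: "1 = (1, 1)"
instance ..
end

instance prod :: (comm_ring_1, comm_ring_1) comm_ring_1
  by standard (auto simp: times_prod_def one_prod_def zero_prod_def plus_prod_def
      minus_prod_def algebra_simps prod_eq_iff)

section \<open>2x2 matrices, written row-major as (a, b, c, d) for [[a, b], [c, d]]\<close>

type_synonym 'a mat2 = "'a \<times> 'a \<times> 'a \<times> 'a"

fun mat2_mult :: "'a::comm_ring_1 mat2 \<Rightarrow> 'a mat2 \<Rightarrow> 'a mat2" where
  "mat2_mult (a, b, c, d) (e, f, g, h) = (a*e + b*g, a*f + b*h, c*e + d*g, c*f + d*h)"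

definition mat2_id :: "'a::comm_ring_1 mat2" where
  "mat2_id = (1, 0, 0, 1)"

definition mat2_neg_id :: "'a::comm_ring_1 mat2" where
  "mat2_neg_id = (-1, 0, 0, -1)"

definition Mq1 :: "'a::comm_ring_1 \<Rightarrow> 'a mat2" where
  "Mq1 a = (a, -1, 1, 0)"

text \<open>M_n(a_1,...,a_n) = M(a_n) ... M(a_1), for the list [a_1,...,a_n].\<close>
fun Mq :: "'a::comm_ring_1 list \<Rightarrow> 'a mat2" where
  "Mq [] = mat2_id"
| "Mq (a # as) = mat2_mult (Mq as) (Mq1 a)"

definition lambda_quiddity :: "'a::comm_ring_1 list \<Rightarrow> bool" where
  "lambda_quiddity c \<longleftrightarrow> Mq c = mat2_id \<or> Mq c = mat2_neg_id"

text \<open>(a_1..a_m) (+) (b_1..b_l) = (a_1+b_l, a_2..a_{m-1}, a_m+b_1, b_2..b_{l-1}).\<close>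
definition qsum :: "'a::comm_ring_1 list \<Rightarrow> 'a list \<Rightarrow> 'a list" where
  "qsum a b = (hd a + last b) # take (length a - 2) (tl a) @ [last a + hd b] @ butlast (tl b)"

definition qequiv :: "'a list \<Rightarrow> 'a list \<Rightarrow> bool" where
  "qequiv c d \<longleftrightarrow> (\<exists>k. d = rotate k c \<or> d = rotate k (rev c))"

definition reducible_quiddity :: "'a::comm_ring_1 list \<Rightarrow> bool" where
  "reducible_quiddity c \<longleftrightarrow> length c \<ge> 3 \<and> lambda_quiddity c \<and>
     (\<exists>a b. length a \<ge> 3 \<and> length b \<ge> 3 \<and> lambda_quiddity b \<and> qequiv c (qsum a b))"

definition irreducible_quiddity :: "'a::comm_ring_1 list \<Rightarrow> bool" where
  "irreducible_quiddity c \<longleftrightarrow> length c \<ge> 3 \<and> lambda_quiddity c \<and> \<not> reducible_quiddity c"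

end

theory Submission
  imports Defs
begin

text \<open>
  For m = n - 4 take c = ((2,1), (1,m+2), (m+2,1), (1,2), (2,2)^m). Both projections of c to
  \<int> are rotations of (1, m+2, 1, 2, ..., 2), the quiddity of the triangulation of the
  n-gon by all diagonals through one vertex, and they are rotated by one step against each other;
  since each is a quiddity, c is one over \<int> \<times> \<int>.
  If c were reducible, c \<sim> a \<oplus> b, the interior of b would be a cyclic window of c (possibly
  reversed) of length between 1 and n - 3 whose continuant is, up to sign, the corner entry of
  M(b) = \<plusminus>Id, hence \<plusminus>1 in both projections. In each of the two fan quiddities the
  windows of continuant 1 are exactly those bordering the fan vertex, and no window borders it in
  both; concretely, one of the two projected continuants of every such window is at least 2.
  For n = 3, (1,1,1) is irreducible since a sum of two tuples of size \<ge> 3 has size \<ge> 4.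
\<close>

abbreviation continuant :: "'a::comm_ring_1 list \<Rightarrow> 'a" where
  "continuant w \<equiv> fst (Mq w)"

lemma mat2_mult_assoc: "mat2_mult (mat2_mult A B) C = mat2_mult A (mat2_mult B C)"
  by (cases A; cases B; cases C) (simp add: algebra_simps)

lemma mat2_mult_id_right [simp]: "mat2_mult A mat2_id = A"
  by (cases A) (simp add: mat2_id_def)

lemma mat2_mult_id_left [simp]: "mat2_mult mat2_id A = A"
  by (cases A) (simp add: mat2_id_def)

lemma Mq_append: "Mq (xs @ ys) = mat2_mult (Mq ys) (Mq xs)"
  by (induction xs) (simp_all add: mat2_mult_assoc)

lemma Mq_rev: "Mq (rev w) = (case Mq w of (a, b, c, d) \<Rightarrow> (a, -c, -b, d))"
  by (induction w) (auto simp: Mq_append mat2_id_def Mq1_def split: prod.splits)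

lemma continuant_rev [simp]: "continuant (rev w) = continuant w"
  by (simp add: Mq_rev split: prod.splits)

lemma Mq_Cons_snoc_corner:
  "Mq (x # w @ [y]) = (e1, e2, e3, e4) \<Longrightarrow> e4 = - continuant w"
  by (cases "Mq w") (auto simp: Mq_append Mq1_def)

lemma Mq_replicate_two:
  "Mq (replicate s (2::'a::comm_ring_1)) = (of_nat s + 1, - of_nat s, of_nat s, 1 - of_nat s)"
  by (induction s) (simp_all add: mat2_id_def Mq1_def algebra_simps)

lemma continuant_replicate_two_sandwich:
  "continuant (replicate s 2 @ w @ replicate t 2) = (case Mq w of (a, b, c, d) \<Rightarrow>
    (of_nat t + 1) * ((of_nat s + 1) * a + of_nat s * b) - of_nat t * ((of_nat s + 1) * c + of_nat s * d))"
  by (cases "Mq w") (simp add: Mq_append Mq_replicate_two algebra_simps)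

definition map_mat2 :: "('a \<Rightarrow> 'b) \<Rightarrow> 'a mat2 \<Rightarrow> 'b mat2" where
  "map_mat2 f = (\<lambda>(a, b, c, d). (f a, f b, f c, f d))"

lemma Mq_map_hom:
  fixes f :: "'a::comm_ring_1 \<Rightarrow> 'b::comm_ring_1"
  assumes "\<And>x y. f (x + y) = f x + f y" "\<And>x y. f (x * y) = f x * f y"
    "f 0 = 0" "f 1 = 1" "\<And>x. f (- x) = - f x"
  shows "Mq (map f xs) = map_mat2 f (Mq xs)"
  by (induction xs) (auto simp: assms map_mat2_def mat2_id_def Mq1_def split: prod.splits)

lemma Mq_map_fst: "Mq (map fst xs) = map_mat2 fst (Mq xs)"
  by (rule Mq_map_hom) (simp_all add: times_prod_def one_prod_def)

lemma Mq_map_snd: "Mq (map snd xs) = map_mat2 snd (Mq xs)"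
  by (rule Mq_map_hom) (simp_all add: times_prod_def one_prod_def)

lemma Mq_eq_neg_id_iff_components:
  "Mq xs = mat2_neg_id \<longleftrightarrow> Mq (map fst xs) = mat2_neg_id \<and> Mq (map snd xs) = mat2_neg_id"
proof -
  obtain a b c d where M: "Mq xs = (a, b, c, d)" by (cases "Mq xs") auto
  show ?thesis
    unfolding Mq_map_fst Mq_map_snd M
    by (auto simp: map_mat2_def mat2_neg_id_def prod_eq_iff one_prod_def)
qed

lemma continuant_unit_components_le_one:
  fixes w :: "(int \<times> int) list"
  assumes "continuant w = 1 \<or> continuant w = -1"
  shows "continuant (map fst w) \<le> 1 \<and> continuant (map snd w) \<le> 1"
proof -
  obtain a b c d where M: "Mq w = (a, b, c, d)" by (cases "Mq w") auto
  from assms show ?thesis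
    unfolding Mq_map_fst Mq_map_snd M by (auto simp: map_mat2_def one_prod_def)
qed

lemma drop_eq_take_rotate: "i \<le> length xs \<Longrightarrow> drop i xs = take (length xs - i) (rotate i xs)"
  by (cases "i = length xs") (simp_all add: rotate_drop_take)

lemma take_rotate_rev:
  "j \<le> length c \<Longrightarrow> \<exists>k'. take j (rotate k (rev c)) = rev (take j (rotate k' c))"
proof -
  assume j: "j \<le> length c"
  define ys where "ys = rotate (length c - k mod length c) c"
  have "take j (rotate k (rev c)) = rev (drop (length c - j) ys)"
    by (simp add: rotate_rev take_rev ys_def)
  also have "\<dots> = rev (take j (rotate (length c - j) ys))"
    using j by (simp add: drop_eq_take_rotate ys_def)
  finally show ?thesis
    by (auto simp: ys_def rotate_rotate)
qed

lemma length_qsum: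
  "length a \<ge> 3 \<Longrightarrow> length b \<ge> 3 \<Longrightarrow> length (qsum a b) = length a + length b - 2"
  by (simp add: qsum_def)

lemma drop_qsum: "length a \<ge> 3 \<Longrightarrow> drop (length a) (qsum a b) = butlast (tl b)"
  by (cases a rule: remdups_adj.cases) (auto simp: qsum_def)

lemma lambda_quiddity_interior_continuant:
  assumes "lambda_quiddity b" "length b \<ge> 3"
  shows "continuant (butlast (tl b)) = 1 \<or> continuant (butlast (tl b)) = -1"
proof -
  have "b = hd b # butlast (tl b) @ [last b]"
    using assms(2) by (cases b) (auto simp: last_tl)
  then obtain e1 e2 e3 e4 where M: "Mq (hd b # butlast (tl b) @ [last b]) = (e1, e2, e3, e4)"
    and "e4 = 1 \<or> e4 = -1"
    using assms(1) by (auto simp: lambda_quiddity_def mat2_id_def mat2_neg_id_def)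
  then show ?thesis
    using Mq_Cons_snoc_corner[OF M] by (auto simp: minus_equation_iff)
qed

lemma reducible_quiddity_unit_window:
  assumes "reducible_quiddity c"
  obtains k j where "1 \<le> j" "j + 3 \<le> length c"
    "continuant (take j (rotate k c)) = 1 \<or> continuant (take j (rotate k c)) = -1"
proof -
  obtain a b where a: "length a \<ge> 3" and b: "length b \<ge> 3" "lambda_quiddity b"
    and "qequiv c (qsum a b)"
    using assms unfolding reducible_quiddity_def by blast
  then obtain r where r: "qsum a b = rotate r c \<or> qsum a b = rotate r (rev c)"
    unfolding qequiv_def by blast
  define w where "w = butlast (tl b)"
  define j where "j = length b - 2"
  have len: "length c = length a + length b - 2"
    using r length_qsum[OF a b(1)] by auto
  have w: "w = take j (rotate (length a) (qsum a b))"
    using drop_eq_take_rotate[of "length a" "qsum a b"] drop_qsum[OF a] length_qsum[OF a b(1)] b(1)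
    by (simp add: w_def j_def)
  have "\<exists>k. w = take j (rotate k c) \<or> w = rev (take j (rotate k c))"
    using r
  proof
    assume "qsum a b = rotate r c"
    then show ?thesis using w by (auto simp: rotate_rotate)
  next
    assume "qsum a b = rotate r (rev c)"
    moreover have "j \<le> length c"
      using len by (simp add: j_def)
    ultimately show ?thesis
      using w take_rotate_rev[of j c "length a + r"] by (auto simp: rotate_rotate)
  qed
  moreover have "continuant w = 1 \<or> continuant w = -1"
    using lambda_quiddity_interior_continuant[OF b(2,1)] by (simp add: w_def)
  moreover have "1 \<le> j" "j + 3 \<le> length c"
    using a b len by (auto simp: j_def)
  ultimately show ?thesis
    using that by (metis continuant_rev)
qed

lemma take_rotate_append_replicate_cases:
  assumes P: "P \<noteq> []" and j: "j \<le> m + 1"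
  obtains "take j (rotate k (P @ replicate m z)) = replicate j z"
  | s i r t where
    "take j (rotate k (P @ replicate m z)) = replicate s z @ take r (drop i P) @ replicate t z"
    "0 < r" "i + r \<le> length P" "0 < s \<Longrightarrow> i = 0" "0 < t \<Longrightarrow> i + r = length P"
proof -
  let ?L = "P @ replicate m z"
  define k' where "k' = k mod length ?L"
  have k': "k' < length ?L" and rot: "rotate k ?L = drop k' ?L @ take k' ?L"
    using P by (simp_all add: k'_def rotate_drop_take)
  show thesis
  proof (cases "k' < length P")
    case True
    then have R: "rotate k ?L = drop k' P @ replicate m z @ take k' P"
      using rot by simp
    show thesis
    proof (cases "j \<le> length P - k'")
      case True
      then have "take j (rotate k ?L) = replicate 0 z @ take j (drop k' P) @ replicate 0 z"
        using R by simp
      then show thesis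
        using that(1) that(2)[of 0 j k' 0] True by (cases "j = 0") auto
    next
      case False
      moreover have "j - (length P - k') \<le> m"
        using \<open>k' < length P\<close> j by linarith
      ultimately have "take j (rotate k ?L) = replicate 0 z @ take (length P - k') (drop k' P)
          @ replicate (j - (length P - k')) z"
        using R by (simp add: take_append min_def)
      then show thesis
        using that(2)[of 0 "length P - k'" k' "j - (length P - k')"] \<open>k' < length P\<close> by simp
    qed
  next
    case False
    then obtain q where q: "k' = length P + q" "q < m"
      using k' by (metis add_less_cancel_left le_Suc_ex length_append length_replicate not_less)
    then have R: "rotate k ?L = replicate (m - q) z @ P @ replicate q z"
      using rot by (simp add: min_def)
    show thesis
    proof (cases "j \<le> m - q")
      case True
      then show thesis
        using that R by (simp add: min_def)
    next
      case False
      define r' where "r' = j - (m - q)"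
      have r': "0 < r'" "r' \<le> length P + q"
        using False j P q unfolding r'_def by (auto simp flip: length_greater_0_conv)
      have T: "take j (rotate k ?L) = replicate (m - q) z @ take r' (P @ replicate q z)"
        using R False by (simp add: r'_def take_append)
      show thesis
      proof (cases "r' \<le> length P")
        case True
        then show thesis
          using that(2)[of "m - q" r' 0 0] T r' by simp
      next
        case False
        then show thesis
          using that(2)[of "m - q" "length P" 0 "r' - length P"] T r' P by (simp add: take_append)
      qed
    qed
  qed
qed

definition fan_pair_quiddity :: "nat \<Rightarrow> (int \<times> int) list" where
  "fan_pair_quiddity m = [(2, 1), (1, int m + 2), (int m + 2, 1), (1, 2)] @ replicate m (2, 2)"

lemma length_fan_pair_quiddity: "length (fan_pair_quiddity m) = m + 4"
  by (simp add: fan_pair_quiddity_def)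

lemma lambda_quiddity_fan_pair_quiddity: "lambda_quiddity (fan_pair_quiddity m)"
  unfolding lambda_quiddity_def Mq_eq_neg_id_iff_components
  by (simp add: fan_pair_quiddity_def Mq_append Mq_replicate_two Mq1_def mat2_id_def
      mat2_neg_id_def algebra_simps)

lemma fan_pair_quiddity_window_component_ge_two:
  fixes j m k :: nat
  assumes "1 \<le> j" "j \<le> m + 1"
  defines "W \<equiv> take j (rotate k (fan_pair_quiddity m))"
  shows "2 \<le> continuant (map fst W) \<or> 2 \<le> continuant (map snd W)"
proof -
  define P :: "(int \<times> int) list" where "P = [(2, 1), (1, int m + 2), (int m + 2, 1), (1, 2)]"
  have W_eq: "W = take j (rotate k (P @ replicate m (2, 2)))"
    by (simp add: W_def fan_pair_quiddity_def P_def)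
  show ?thesis
  proof (rule take_rotate_append_replicate_cases[of P j m k "(2, 2)"])
    show "take j (rotate k (P @ replicate m (2, 2))) = replicate j (2, 2) \<Longrightarrow> ?thesis"
      using assms(1) by (simp add: W_eq Mq_replicate_two)
  next
    fix s i r t
    define Q where "Q = take r (drop i P)"
    assume W: "take j (rotate k (P @ replicate m (2, 2)))
        = replicate s (2, 2) @ take r (drop i P) @ replicate t (2, 2)"
      and r: "0 < r" "i + r \<le> length P" and s: "0 < s \<Longrightarrow> i = 0" and t: "0 < t \<Longrightarrow> i + r = length P"
    have "length W = j"
      using assms(2) by (simp add: W_def length_fan_pair_quiddity)
    then have len: "s + r + t \<le> m + 1"
      using assms(2) W r by (simp add: W_eq min_def split: if_splits)
    have s': "i = 0 \<or> s = 0" and t': "i + r = 4 \<or> t = 0"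
      using s t by (auto simp: P_def)
    have "continuant (map fst W) = (case Mq (map fst Q) of (a, b, c, d) \<Rightarrow>
        (of_nat t + 1) * ((of_nat s + 1) * a + of_nat s * b) - of_nat t * ((of_nat s + 1) * c + of_nat s * d))"
      "continuant (map snd W) = (case Mq (map snd Q) of (a, b, c, d) \<Rightarrow>
        (of_nat t + 1) * ((of_nat s + 1) * a + of_nat s * b) - of_nat t * ((of_nat s + 1) * c + of_nat s * d))"
      by (simp_all only: W_eq W Q_def[symmetric] map_append map_replicate fst_conv snd_conv
          continuant_replicate_two_sandwich)
    moreover have "(i, r) \<in> {(0,1),(0,2),(0,3),(0,4),(1,1),(1,2),(1,3),(2,1),(2,2),(3,1)}"
      using r by (simp add: P_def) arith
    ultimately show ?thesis
      using s' t' len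
      by (elim insertE emptyE) (simp_all add: Q_def P_def Mq1_def mat2_id_def algebra_simps)
  qed (use assms in \<open>simp_all add: P_def\<close>)
qed

lemma lambda_quiddity_replicate_three_one: "lambda_quiddity (replicate 3 (1 :: 'a::comm_ring_1))"
  by (simp add: lambda_quiddity_def numeral_3_eq_3 Mq1_def mat2_id_def mat2_neg_id_def)

lemma irreducible_quiddityI:
  assumes "length c \<ge> 3" "lambda_quiddity c"
    and "\<And>k j. 1 \<le> j \<Longrightarrow> j + 3 \<le> length c \<Longrightarrow>
      continuant (take j (rotate k c)) \<noteq> 1 \<and> continuant (take j (rotate k c)) \<noteq> -1"
  shows "irreducible_quiddity c"
  using assms reducible_quiddity_unit_window unfolding irreducible_quiddity_def by metis

theorem corollary2p9:
  fixes n :: nat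
  assumes "n \<ge> 3"
  shows "\<exists>c :: (int \<times> int) list. length c = n \<and> irreducible_quiddity c"
proof (cases "n = 3")
  case True
  have "irreducible_quiddity (replicate 3 (1 :: int \<times> int))"
    by (rule irreducible_quiddityI) (simp_all add: lambda_quiddity_replicate_three_one)
  then show ?thesis
    using True by (metis length_replicate)
next
  case False
  define m where "m = n - 4"
  have "irreducible_quiddity (fan_pair_quiddity m)"
  proof (rule irreducible_quiddityI)
    fix k j
    assume "1 \<le> j" "j + 3 \<le> length (fan_pair_quiddity m)"
    then have "2 \<le> continuant (map fst (take j (rotate k (fan_pair_quiddity m))))
      \<or> 2 \<le> continuant (map snd (take j (rotate k (fan_pair_quiddity m))))"
      by (intro fan_pair_quiddity_window_component_ge_two) (simp_all add: length_fan_pair_quiddity)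
    then show "continuant (take j (rotate k (fan_pair_quiddity m))) \<noteq> 1
      \<and> continuant (take j (rotate k (fan_pair_quiddity m))) \<noteq> -1"
      using continuant_unit_components_le_one by fastforce
  qed (simp_all add: length_fan_pair_quiddity lambda_quiddity_fan_pair_quiddity)
  moreover have "length (fan_pair_quiddity m) = n"
    using assms False by (simp add: m_def length_fan_pair_quiddity)
  ultimately show ?thesis
    by blast
qed

end
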